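(* Let $n\ge 1$, let $\Omega\subset\mathbb{R}^n$ be a domain, and let $\boldsymbol{\alpha}:\mathbb{R}^n\times\mathbb{R}^n\to\mathbb{R}^n$ be a nonlocal weight function satisfying $\boldsymbol{\alpha}(\mathbf{x},\mathbf{x}')=-\boldsymbol{\alpha}(\mathbf{x}',\mathbf{x})$ for all $\mathbf{x},\mathbf{x}'$. Define the interaction (volume-constrained boundary) region $$\Omega_\tau=\{\mathbf{x}'\in\mathbb{R}^n\setminus\Omega \;:\; \exists\,\mathbf{x}\in\Omega \text{ with } \boldsymbol{\alpha}(\mathbf{x},\mathbf{x}')\neq\mathbf{0}\}.$$ Let $\boldsymbol{\Theta}(\mathbf{x},\mathbf{x}')$ be a fourth-order tensor field on $(\Omega\cup\Omega_\tau)\times(\Omega\cup\Omega_\tau)$ with components satisfying $\Theta_{ijkl}=\Theta_{jikl}=\Theta_{ijlk}=\Theta_{klij}$ and $\boldsymbol{\Theta}(\mathbf{x},\mathbf{x}')=\boldsymbol{\Theta}(\mathbf{x}',\mathbf{x})$. For vector fields $\mathbf{w}$ on $\Omega\cup\Omega_\tau$ and second-order tensor fields $\boldsymbol{\Psi}(\mathbf{x},\mathbf{x}')$ on $(\Omega\cup\Omega_\tau)^2$ define $$\mathcal{D}^*(\mathbf{w})(\mathbf{x},\mathbf{x}')=-[\mathbf{w}(\mathbf{x}')-\mathbf{w}(\mathbf{x})]\otimes\boldsymbol{\alpha}(\mathbf{x},\mathbf{x}'),$$ $$\mathcal{D}(\boldsymbol{\Psi})(\mathbf{x})=\int_{\Omega\cup\Omega_\tau}[\boldsymbol{\Psi}(\mathbf{x},\mathbf{x}')+\boldsymbol{\Psi}(\mathbf{x}',\mathbf{x})]\cdot\boldsymbol{\alpha}(\mathbf{x},\mathbf{x}')\,dV_{\mathbf{x}'}\quad(\mathbf{x}\in\Omega),$$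 $$\mathcal{N}(\boldsymbol{\Psi})(\mathbf{x})=-\int_{\Omega\cup\Omega_\tau}[\boldsymbol{\Psi}(\mathbf{x},\mathbf{x}')+\boldsymbol{\Psi}(\mathbf{x}',\mathbf{x})]\cdot\boldsymbol{\alpha}(\mathbf{x},\mathbf{x}')\,dV_{\mathbf{x}'}\quad(\mathbf{x}\in\Omega_\tau),$$ where $(\boldsymbol{\Theta}:\mathbf{A})_{ij}=\Theta_{ijkl}A_{kl}$ and $(\boldsymbol{\Psi}\cdot\boldsymbol{\alpha})_i=\Psi_{ij}\alpha_j$. Then for any two vector fields $\mathbf{v}_1,\mathbf{v}_2$ on $\Omega\cup\Omega_\tau$ for which all the integrals involved converge absolutely, $$\int_{\Omega}\Big[\mathbf{v}_1(\mathbf{x})\cdot\mathcal{D}\big(\boldsymbol{\Theta}:\mathcal{D}^*(\mathbf{v}_2)\big)(\mathbf{x})-\mathbf{v}_2(\mathbf{x})\cdot\mathcal{D}\big(\boldsymbol{\Theta}:\mathcal{D}^*(\mathbf{v}_1)\big)(\mathbf{x})\Big]dV_{\mathbf{x}}$$ $$=\int_{\Omega_\tau}\Big[\mathbf{v}_1(\mathbf{x})\cdot\mathcal{N}\big(\boldsymbol{\Theta}:\mathcal{D}^*(\mathbf{v}_2)\big)(\mathbf{x})-\mathbf{v}_2(\mathbf{x})\cdot\mathcal{N}\big(\boldsymbol{\Theta}:\mathcal{D}^*(\mathbf{v}_1)\big)(\mathbf{x})\Big]dV_{\mathbf{x}}.$$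
   Context: This is the nonlocal (peridynamic) reciprocal theorem for linear elasticity, formulated with the nonlocal divergence operator $\mathcal{D}$, its adjoint-type operator $\mathcal{D}^*$, and the nonlocal interaction (traction) operator $\mathcal{N}$. Since $\boldsymbol{\alpha}(\mathbf{x},\mathbf{x}')\ne\mathbf{0}$ with $\mathbf{x}\in\Omega$ forces $\mathbf{x}'\in\Omega\cup\Omega_\tau$, integrating over $\Omega\cup\Omega_\tau$ in $\mathcal{D}$ is the same as integrating over $\mathbb{R}^n$. Note $\Omega\cap\Omega_\tau=\emptyset$. *)

theory Defs
  imports "HOL-Analysis.Analysis"
begin

text \<open>Points of R^n are of type real^'n; second-order tensor fields on pairs of
points are functions x x' i j; the fourth-order field Theta is x x' i j k l.\<close>

definition interaction_region ::
  "(real^'n) set \<Rightarrow> (real^'n \<Rightarrow> real^'n \<Rightarrow> real^'n) \<Rightarrow> (real^'n) set" where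
  "interaction_region \<Omega> \<alpha> = {x'. x' \<notin> \<Omega> \<and> (\<exists>x\<in>\<Omega>. \<alpha> x x' \<noteq> 0)}"

definition Dstar ::
  "(real^'n \<Rightarrow> real^'n) \<Rightarrow> (real^'n \<Rightarrow> real^'n \<Rightarrow> real^'n)
   \<Rightarrow> real^'n \<Rightarrow> real^'n \<Rightarrow> 'n \<Rightarrow> 'n \<Rightarrow> real" where
  "Dstar w \<alpha> x x' i j = - ((w x' $ i - w x $ i) * (\<alpha> x x' $ j))"

definition ddot ::
  "(real^'n \<Rightarrow> real^'n \<Rightarrow> 'n \<Rightarrow> 'n \<Rightarrow> 'n \<Rightarrow> 'n \<Rightarrow> real)
   \<Rightarrow> (real^'n \<Rightarrow> real^'n \<Rightarrow> 'n \<Rightarrow> 'n \<Rightarrow> real)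
   \<Rightarrow> real^'n \<Rightarrow> real^'n \<Rightarrow> 'n \<Rightarrow> 'n \<Rightarrow> real" where
  "ddot \<Theta> A x x' i j = (\<Sum>k\<in>UNIV. \<Sum>l\<in>UNIV. \<Theta> x x' i j k l * A x x' k l)"

definition sym_dot ::
  "(real^'n \<Rightarrow> real^'n \<Rightarrow> real^'n) \<Rightarrow> (real^'n \<Rightarrow> real^'n \<Rightarrow> 'n \<Rightarrow> 'n \<Rightarrow> real)
   \<Rightarrow> real^'n \<Rightarrow> real^'n \<Rightarrow> 'n \<Rightarrow> real" where
  "sym_dot \<alpha> \<Psi> x x' i = (\<Sum>j\<in>UNIV. (\<Psi> x x' i j + \<Psi> x' x i j) * (\<alpha> x x' $ j))"

text \<open>Nonlocal divergence D (meaningful for x in Omega), U = Omega union Omega_tau\<close>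
definition Dop ::
  "(real^'n) set \<Rightarrow> (real^'n \<Rightarrow> real^'n \<Rightarrow> real^'n)
   \<Rightarrow> (real^'n \<Rightarrow> real^'n \<Rightarrow> 'n \<Rightarrow> 'n \<Rightarrow> real) \<Rightarrow> real^'n \<Rightarrow> real^'n" where
  "Dop U \<alpha> \<Psi> x = (\<chi> i. LINT x':U|lborel. sym_dot \<alpha> \<Psi> x x' i)"

text \<open>Nonlocal interaction operator N (meaningful for x in Omega_tau)\<close>
definition Nop ::
  "(real^'n) set \<Rightarrow> (real^'n \<Rightarrow> real^'n \<Rightarrow> real^'n)
   \<Rightarrow> (real^'n \<Rightarrow> real^'n \<Rightarrow> 'n \<Rightarrow> 'n \<Rightarrow> real) \<Rightarrow> real^'n \<Rightarrow> real^'n" where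
  "Nop U \<alpha> \<Psi> x = (\<chi> i. - (LINT x':U|lborel. sym_dot \<alpha> \<Psi> x x' i))"

end

theory Submission
  imports Defs
begin

text \<open>Write \<open>\<Psi>_w = \<Theta> : D*(w)\<close>.  The integrand of \<open>D(\<Psi>_w)\<close> is the pair force
  \<open>f_w(x,x') = -2 Q(x,x') (w(x') - w(x))\<close>, where \<open>Q(x,x')_ik = \<Theta>_ijkl \<alpha>_j \<alpha>_l\<close> is the
  acoustic tensor of \<open>\<Theta>(x,x')\<close> in the direction \<open>\<alpha>(x,x')\<close>.  The major symmetry of \<open>\<Theta>\<close>
  makes \<open>Q\<close> symmetric, and \<open>\<Theta>(x',x) = \<Theta>(x,x')\<close>, \<open>\<alpha>(x',x) = -\<alpha>(x,x')\<close> make it invariant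
  under exchanging \<open>x\<close> and \<open>x'\<close>.  Hence the reciprocal work density
  \<open>g(x,x') = v1(x)\<cdot>f_v2(x,x') - v2(x)\<cdot>f_v1(x,x')\<close> is antisymmetric and integrates to zero over
  \<open>U \<times> U\<close>.  Splitting \<open>U = \<Omega> \<union> \<Omega>\<tau>\<close> in the first variable, Fubini identifies the
  \<open>\<Omega>\<close>-part with the left-hand side and, since \<open>N = -D\<close>, the \<open>\<Omega>\<tau>\<close>-part with minus the
  right-hand side.\<close>

lemma set_integrable_sum:
  fixes f :: "'i \<Rightarrow> 'a \<Rightarrow> 'b::{banach, second_countable_topology}"
  assumes "\<And>i. i \<in> I \<Longrightarrow> set_integrable M A (f i)"
  shows "set_integrable M A (\<lambda>x. \<Sum>i\<in>I. f i x)"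
  using assms unfolding set_integrable_def by (simp add: scaleR_sum_right)

lemma set_integral_sum:
  fixes f :: "'i \<Rightarrow> 'a \<Rightarrow> 'b::{banach, second_countable_topology}"
  assumes "\<And>i. i \<in> I \<Longrightarrow> set_integrable M A (f i)"
  shows "(LINT x:A|M. \<Sum>i\<in>I. f i x) = (\<Sum>i\<in>I. LINT x:A|M. f i x)"
  using assms unfolding set_integrable_def set_lebesgue_integral_def
  by (simp add: scaleR_sum_right integral_sum)

lemma set_integrable_Un_disjoint:
  fixes f :: "'a \<Rightarrow> 'b::{banach, second_countable_topology}"
  assumes "A \<inter> B = {}" "set_integrable M A f" "set_integrable M B f"
  shows "set_integrable M (A \<union> B) f"
proof -
  have "(\<lambda>x. indicator (A \<union> B) x *\<^sub>R f x) = (\<lambda>x. indicator A x *\<^sub>R f x + indicator B x *\<^sub>R f x)"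
    using assms(1) by (auto simp: fun_eq_iff split: split_indicator)
  then show ?thesis
    using assms(2,3) unfolding set_integrable_def by simp
qed

lemma (in pair_sigma_finite) set_integrable_rectangle_fst:
  fixes f :: "'a \<Rightarrow> 'b \<Rightarrow> 'c::{banach, second_countable_topology}"
  assumes "set_integrable (M1 \<Otimes>\<^sub>M M2) (A \<times> B) (\<lambda>(x, y). f x y)"
  shows "set_integrable M1 A (\<lambda>x. LINT y:B|M2. f x y)"
    and "(LINT x:A|M1. LINT y:B|M2. f x y)
       = set_lebesgue_integral (M1 \<Otimes>\<^sub>M M2) (A \<times> B) (\<lambda>(x, y). f x y)"
proof -
  let ?g = "\<lambda>z. indicator (A \<times> B) z *\<^sub>R (case z of (x, y) \<Rightarrow> f x y)"
  have g: "integrable (M1 \<Otimes>\<^sub>M M2) ?g"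
    using assms unfolding set_integrable_def .
  have inner: "(\<integral>y. ?g (x, y) \<partial>M2) = indicator A x *\<^sub>R (LINT y:B|M2. f x y)" for x
    unfolding set_lebesgue_integral_def by (simp add: indicator_times flip: scaleR_scaleR)
  show "set_integrable M1 A (\<lambda>x. LINT y:B|M2. f x y)"
    using integrable_fst'[OF g] unfolding inner set_integrable_def .
  show "(LINT x:A|M1. LINT y:B|M2. f x y)
       = set_lebesgue_integral (M1 \<Otimes>\<^sub>M M2) (A \<times> B) (\<lambda>(x, y). f x y)"
    using integral_fst'[OF g] unfolding inner set_lebesgue_integral_def .
qed

lemma (in sigma_finite_measure) set_integral_antisymmetric_eq_0:
  fixes f :: "'a \<times> 'a \<Rightarrow> 'b::{banach, second_countable_topology}"
  assumes f: "set_integrable (M \<Otimes>\<^sub>M M) (A \<times> A) f"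
    and antisym: "\<And>x y. x \<in> A \<Longrightarrow> y \<in> A \<Longrightarrow> f (y, x) = - f (x, y)"
  shows "set_lebesgue_integral (M \<Otimes>\<^sub>M M) (A \<times> A) f = 0"
proof -
  interpret pair_sigma_finite M M ..
  let ?g = "\<lambda>z. indicator (A \<times> A) z *\<^sub>R f z"
  have "?g \<in> borel_measurable (M \<Otimes>\<^sub>M M)"
    using f unfolding set_integrable_def by (rule borel_measurable_integrable)
  then have "integral\<^sup>L (M \<Otimes>\<^sub>M M) ?g = (\<integral>(x, y). ?g (y, x) \<partial>(M \<Otimes>\<^sub>M M))"
    by (rule integral_product_swap[symmetric])
  also have "\<dots> = (\<integral>z. - ?g z \<partial>(M \<Otimes>\<^sub>M M))"
  proof (intro Bochner_Integration.integral_cong refl, clarify)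
    fix x y
    show "?g (y, x) = - ?g (x, y)"
      using antisym[of x y] by (auto split: split_indicator)
  qed
  finally show ?thesis
    unfolding set_lebesgue_integral_def by (simp add: eq_neg_iff_add_eq_0 flip: scaleR_2)
qed

lemma (in sigma_finite_measure) set_integral_antisymmetric_split:
  fixes f :: "'a \<times> 'a \<Rightarrow> 'b::{banach, second_countable_topology}"
  assumes disjoint: "A \<inter> B = {}"
    and fA: "set_integrable (M \<Otimes>\<^sub>M M) (A \<times> (A \<union> B)) f"
    and fB: "set_integrable (M \<Otimes>\<^sub>M M) (B \<times> (A \<union> B)) f"
    and antisym: "\<And>x y. x \<in> A \<union> B \<Longrightarrow> y \<in> A \<union> B \<Longrightarrow> f (y, x) = - f (x, y)"
  shows "set_lebesgue_integral (M \<Otimes>\<^sub>M M) (A \<times> (A \<union> B)) f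
       = - set_lebesgue_integral (M \<Otimes>\<^sub>M M) (B \<times> (A \<union> B)) f"
proof -
  have square: "(A \<union> B) \<times> (A \<union> B) = A \<times> (A \<union> B) \<union> B \<times> (A \<union> B)"
    by blast
  have pieces_disjoint: "A \<times> (A \<union> B) \<inter> B \<times> (A \<union> B) = {}"
    using disjoint by blast
  have "set_integrable (M \<Otimes>\<^sub>M M) ((A \<union> B) \<times> (A \<union> B)) f"
    unfolding square using pieces_disjoint fA fB by (rule set_integrable_Un_disjoint)
  then have "set_lebesgue_integral (M \<Otimes>\<^sub>M M) ((A \<union> B) \<times> (A \<union> B)) f = 0"
    using antisym by (rule set_integral_antisymmetric_eq_0)
  then show ?thesis
    unfolding square set_integral_Un[OF pieces_disjoint fA fB] by (simp add: eq_neg_iff_add_eq_0)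
qed

lemma (in pair_sigma_finite) set_integral_inner_iterated:
  fixes u :: "'a \<Rightarrow> real^'n" and F :: "'a \<Rightarrow> 'b \<Rightarrow> real^'n"
  assumes "\<And>i. set_integrable (M1 \<Otimes>\<^sub>M M2) (A \<times> B) (\<lambda>(x, y). u x $ i * F x y $ i)"
  shows "set_integrable (M1 \<Otimes>\<^sub>M M2) (A \<times> B) (\<lambda>(x, y). u x \<bullet> F x y)"
    and "set_integrable M1 A (\<lambda>x. u x \<bullet> (\<chi> i. LINT y:B|M2. F x y $ i))"
    and "(LINT x:A|M1. u x \<bullet> (\<chi> i. LINT y:B|M2. F x y $ i))
       = set_lebesgue_integral (M1 \<Otimes>\<^sub>M M2) (A \<times> B) (\<lambda>(x, y). u x \<bullet> F x y)"
proof -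
  show "set_integrable (M1 \<Otimes>\<^sub>M M2) (A \<times> B) (\<lambda>(x, y). u x \<bullet> F x y)"
    using set_integrable_sum[OF assms] by (simp add: inner_vec_def case_prod_unfold)
  have inner_eq_sum:
    "u x \<bullet> (\<chi> i. LINT y:B|M2. F x y $ i) = (\<Sum>i\<in>UNIV. LINT y:B|M2. u x $ i * F x y $ i)" for x
    by (simp add: inner_vec_def)
  have "\<And>i. set_integrable M1 A (\<lambda>x. LINT y:B|M2. u x $ i * F x y $ i)"
    using assms by (rule set_integrable_rectangle_fst)
  then show "set_integrable M1 A (\<lambda>x. u x \<bullet> (\<chi> i. LINT y:B|M2. F x y $ i))"
    unfolding inner_eq_sum by (rule set_integrable_sum)
  have "(LINT x:A|M1. u x \<bullet> (\<chi> i. LINT y:B|M2. F x y $ i))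
      = (\<Sum>i\<in>UNIV. set_lebesgue_integral (M1 \<Otimes>\<^sub>M M2) (A \<times> B) (\<lambda>(x, y). u x $ i * F x y $ i))"
    unfolding inner_eq_sum set_integral_sum[OF set_integrable_rectangle_fst(1)[OF assms]]
    using set_integrable_rectangle_fst(2)[OF assms] by simp
  also have "\<dots> = set_lebesgue_integral (M1 \<Otimes>\<^sub>M M2) (A \<times> B) (\<lambda>(x, y). u x \<bullet> F x y)"
    unfolding set_integral_sum[OF assms, symmetric] by (simp add: inner_vec_def case_prod_unfold)
  finally show "(LINT x:A|M1. u x \<bullet> (\<chi> i. LINT y:B|M2. F x y $ i))
       = set_lebesgue_integral (M1 \<Otimes>\<^sub>M M2) (A \<times> B) (\<lambda>(x, y). u x \<bullet> F x y)" .
qed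

lemma inner_symmetric_matrix:
  fixes A :: "real^'n^'n"
  assumes "transpose A = A"
  shows "x \<bullet> (A *v y) = y \<bullet> (A *v x)"
  by (metis assms dot_lmul_matrix inner_commute vector_transpose_matrix)

definition acoustic_tensor :: "('n \<Rightarrow> 'n \<Rightarrow> 'n \<Rightarrow> 'n \<Rightarrow> real) \<Rightarrow> real^'n \<Rightarrow> real^'n^'n" where
  "acoustic_tensor C a = (\<chi> i k. \<Sum>j\<in>UNIV. \<Sum>l\<in>UNIV. C i j k l * a $ j * a $ l)"

lemma acoustic_tensor_uminus: "acoustic_tensor C (- a) = acoustic_tensor C a"
  by (simp add: acoustic_tensor_def)

lemma transpose_acoustic_tensor:
  assumes "\<And>i j k l. C i j k l = C k l i j"
  shows "transpose (acoustic_tensor C a) = acoustic_tensor C a"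
  unfolding acoustic_tensor_def transpose_def
  by (subst sum.swap) (simp add: assms mult.commute mult.left_commute)

definition pair_force ::
  "(real^'n \<Rightarrow> real^'n \<Rightarrow> real^'n) \<Rightarrow> (real^'n \<Rightarrow> real^'n \<Rightarrow> 'n \<Rightarrow> 'n \<Rightarrow> 'n \<Rightarrow> 'n \<Rightarrow> real)
   \<Rightarrow> (real^'n \<Rightarrow> real^'n) \<Rightarrow> real^'n \<Rightarrow> real^'n \<Rightarrow> real^'n" where
  "pair_force \<alpha> \<Theta> w x x' = (\<chi> i. sym_dot \<alpha> (ddot \<Theta> (Dstar w \<alpha>)) x x' i)"

lemma Dop_eq_integral_pair_force:
  "Dop U \<alpha> (ddot \<Theta> (Dstar w \<alpha>)) x = (\<chi> i. LINT x':U|lborel. pair_force \<alpha> \<Theta> w x x' $ i)"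
  by (simp add: Dop_def pair_force_def)

lemma Nop_eq_uminus_Dop: "Nop U \<alpha> \<Psi> x = - Dop U \<alpha> \<Psi> x"
  by (simp add: Nop_def Dop_def vec_eq_iff)

lemma ddot_Dstar_swap:
  assumes "\<Theta> x' x = \<Theta> x x'" "\<alpha> x' x = - \<alpha> x x'"
  shows "ddot \<Theta> (Dstar w \<alpha>) x' x = ddot \<Theta> (Dstar w \<alpha>) x x'"
  using assms by (simp add: fun_eq_iff ddot_def Dstar_def algebra_simps)

lemma pair_force_eq_acoustic_tensor:
  assumes "\<Theta> x' x = \<Theta> x x'" "\<alpha> x' x = - \<alpha> x x'"
  shows "pair_force \<alpha> \<Theta> w x x' = - 2 *\<^sub>R (acoustic_tensor (\<Theta> x x') (\<alpha> x x') *v (w x' - w x))"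
proof (subst vec_eq_iff, intro allI)
  fix i
  let ?d = "w x' - w x" and ?a = "\<alpha> x x'"
  have "pair_force \<alpha> \<Theta> w x x' $ i = 2 * (\<Sum>j\<in>UNIV. ddot \<Theta> (Dstar w \<alpha>) x x' i j * ?a $ j)"
    by (simp add: pair_force_def sym_dot_def ddot_Dstar_swap[where x = x and x' = x', OF assms]
        sum_distrib_left mult.assoc)
  also have "\<dots> = - 2 * (\<Sum>j\<in>UNIV. \<Sum>k\<in>UNIV. \<Sum>l\<in>UNIV. \<Theta> x x' i j k l * ?a $ j * ?a $ l * ?d $ k)"
    unfolding ddot_def Dstar_def
    by (simp only: sum_distrib_left sum_distrib_right) (intro sum.cong refl; simp add: algebra_simps)
  also have "\<dots> = - 2 * (\<Sum>k\<in>UNIV. \<Sum>j\<in>UNIV. \<Sum>l\<in>UNIV. \<Theta> x x' i j k l * ?a $ j * ?a $ l * ?d $ k)"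
    by (subst sum.swap) (rule refl)
  also have "\<dots> = (- 2 *\<^sub>R (acoustic_tensor (\<Theta> x x') ?a *v ?d)) $ i"
    by (simp add: acoustic_tensor_def matrix_vector_mult_def sum_distrib_right)
  finally show "pair_force \<alpha> \<Theta> w x x' $ i = (- 2 *\<^sub>R (acoustic_tensor (\<Theta> x x') ?a *v ?d)) $ i" .
qed

definition reciprocal_work ::
  "(real^'n \<Rightarrow> real^'n \<Rightarrow> real^'n) \<Rightarrow> (real^'n \<Rightarrow> real^'n \<Rightarrow> 'n \<Rightarrow> 'n \<Rightarrow> 'n \<Rightarrow> 'n \<Rightarrow> real)
   \<Rightarrow> (real^'n \<Rightarrow> real^'n) \<Rightarrow> (real^'n \<Rightarrow> real^'n) \<Rightarrow> (real^'n) \<times> (real^'n) \<Rightarrow> real" where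
  "reciprocal_work \<alpha> \<Theta> v1 v2 =
     (\<lambda>(x, x'). v1 x \<bullet> pair_force \<alpha> \<Theta> v2 x x' - v2 x \<bullet> pair_force \<alpha> \<Theta> v1 x x')"

lemma reciprocal_work_antisymmetric:
  assumes "\<Theta> x' x = \<Theta> x x'" "\<alpha> x' x = - \<alpha> x x'"
    and major_sym: "\<And>i j k l. \<Theta> x x' i j k l = \<Theta> x x' k l i j"
  shows "reciprocal_work \<alpha> \<Theta> v1 v2 (x', x) = - reciprocal_work \<alpha> \<Theta> v1 v2 (x, x')"
proof -
  let ?Q = "acoustic_tensor (\<Theta> x x') (\<alpha> x x')"
  have swapped: "acoustic_tensor (\<Theta> x' x) (\<alpha> x' x) = ?Q"
    using assms(1,2) acoustic_tensor_uminus by metis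
  have reverse_assms: "\<Theta> x x' = \<Theta> x' x" "\<alpha> x x' = - \<alpha> x' x"
    using assms(1,2) by simp_all
  have "(v1 x' - v1 x) \<bullet> (?Q *v (v2 x' - v2 x)) = (v2 x' - v2 x) \<bullet> (?Q *v (v1 x' - v1 x))"
    using transpose_acoustic_tensor[OF major_sym] by (rule inner_symmetric_matrix)
  then show ?thesis
    unfolding reciprocal_work_def prod.case
      pair_force_eq_acoustic_tensor[where x = x and x' = x', OF assms(1,2)]
      pair_force_eq_acoustic_tensor[where x = x' and x' = x, OF reverse_assms] swapped
    by (simp add: algebra_simps inner_diff_left inner_diff_right)
qed

lemma set_integral_reciprocal_work:
  fixes v1 v2 :: "real^'n \<Rightarrow> real^'n"
  assumes "\<And>i. set_integrable (lborel \<Otimes>\<^sub>M lborel) (S \<times> U)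
          (\<lambda>(x, x'). v1 x $ i * sym_dot \<alpha> (ddot \<Theta> (Dstar v2 \<alpha>)) x x' i)"
    and "\<And>i. set_integrable (lborel \<Otimes>\<^sub>M lborel) (S \<times> U)
          (\<lambda>(x, x'). v2 x $ i * sym_dot \<alpha> (ddot \<Theta> (Dstar v1 \<alpha>)) x x' i)"
  shows "set_integrable (lborel \<Otimes>\<^sub>M lborel) (S \<times> U) (reciprocal_work \<alpha> \<Theta> v1 v2)"
    and "(LINT x:S|lborel.
            v1 x \<bullet> Dop U \<alpha> (ddot \<Theta> (Dstar v2 \<alpha>)) x - v2 x \<bullet> Dop U \<alpha> (ddot \<Theta> (Dstar v1 \<alpha>)) x)
       = set_lebesgue_integral (lborel \<Otimes>\<^sub>M lborel) (S \<times> U) (reciprocal_work \<alpha> \<Theta> v1 v2)"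
proof -
  have "set_integrable (lborel \<Otimes>\<^sub>M lborel) (S \<times> U) (\<lambda>(x, x'). v1 x $ i * pair_force \<alpha> \<Theta> v2 x x' $ i)"
    and "set_integrable (lborel \<Otimes>\<^sub>M lborel) (S \<times> U) (\<lambda>(x, x'). v2 x $ i * pair_force \<alpha> \<Theta> v1 x x' $ i)"
    for i
    using assms by (simp_all add: pair_force_def)
  note work12 = lborel_pair.set_integral_inner_iterated[OF this(1)]
    and work21 = lborel_pair.set_integral_inner_iterated[OF this(2)]
  show "set_integrable (lborel \<Otimes>\<^sub>M lborel) (S \<times> U) (reciprocal_work \<alpha> \<Theta> v1 v2)"
    using set_integral_diff(1)[OF work12(1) work21(1)] by (simp add: reciprocal_work_def case_prod_unfold)
  show "(LINT x:S|lborel.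
            v1 x \<bullet> Dop U \<alpha> (ddot \<Theta> (Dstar v2 \<alpha>)) x - v2 x \<bullet> Dop U \<alpha> (ddot \<Theta> (Dstar v1 \<alpha>)) x)
       = set_lebesgue_integral (lborel \<Otimes>\<^sub>M lborel) (S \<times> U) (reciprocal_work \<alpha> \<Theta> v1 v2)"
    unfolding Dop_eq_integral_pair_force set_integral_diff(2)[OF work12(2) work21(2)] work12(3) work21(3)
    using set_integral_diff(2)[OF work12(1) work21(1)] by (simp add: reciprocal_work_def case_prod_unfold)
qed

theorem mainTheorem1:
  fixes \<Omega> :: "(real^'n) set"
    and \<alpha> :: "real^'n \<Rightarrow> real^'n \<Rightarrow> real^'n"
    and \<Theta> :: "real^'n \<Rightarrow> real^'n \<Rightarrow> 'n \<Rightarrow> 'n \<Rightarrow> 'n \<Rightarrow> 'n \<Rightarrow> real"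
    and v1 v2 :: "real^'n \<Rightarrow> real^'n"
  defines "\<Omega>\<tau> \<equiv> interaction_region \<Omega> \<alpha>"
  defines "U \<equiv> \<Omega> \<union> \<Omega>\<tau>"
  assumes domain: "open \<Omega>" "connected \<Omega>" "\<Omega> \<noteq> {}"
    and antisym: "\<And>x x'. \<alpha> x x' = - \<alpha> x' x"
    and Theta_sym: "\<And>x x' i j k l. x \<in> U \<Longrightarrow> x' \<in> U \<Longrightarrow>
          \<Theta> x x' i j k l = \<Theta> x x' j i k l \<and>
          \<Theta> x x' i j k l = \<Theta> x x' i j l k \<and>
          \<Theta> x x' i j k l = \<Theta> x x' k l i j"
    and Theta_swap: "\<And>x x'. x \<in> U \<Longrightarrow> x' \<in> U \<Longrightarrow> \<Theta> x x' = \<Theta> x' x"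
    and int12_\<Omega>: "\<And>i. set_integrable (lborel \<Otimes>\<^sub>M lborel) (\<Omega> \<times> U)
          (\<lambda>(x, x'). v1 x $ i * sym_dot \<alpha> (ddot \<Theta> (Dstar v2 \<alpha>)) x x' i)"
    and int21_\<Omega>: "\<And>i. set_integrable (lborel \<Otimes>\<^sub>M lborel) (\<Omega> \<times> U)
          (\<lambda>(x, x'). v2 x $ i * sym_dot \<alpha> (ddot \<Theta> (Dstar v1 \<alpha>)) x x' i)"
    and int12_\<tau>: "\<And>i. set_integrable (lborel \<Otimes>\<^sub>M lborel) (\<Omega>\<tau> \<times> U)
          (\<lambda>(x, x'). v1 x $ i * sym_dot \<alpha> (ddot \<Theta> (Dstar v2 \<alpha>)) x x' i)"
    and int21_\<tau>: "\<And>i. set_integrable (lborel \<Otimes>\<^sub>M lborel) (\<Omega>\<tau> \<times> U)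
          (\<lambda>(x, x'). v2 x $ i * sym_dot \<alpha> (ddot \<Theta> (Dstar v1 \<alpha>)) x x' i)"
  shows "(LINT x:\<Omega>|lborel.
            v1 x \<bullet> Dop U \<alpha> (ddot \<Theta> (Dstar v2 \<alpha>)) x
          - v2 x \<bullet> Dop U \<alpha> (ddot \<Theta> (Dstar v1 \<alpha>)) x)
       = (LINT x:\<Omega>\<tau>|lborel.
            v1 x \<bullet> Nop U \<alpha> (ddot \<Theta> (Dstar v2 \<alpha>)) x
          - v2 x \<bullet> Nop U \<alpha> (ddot \<Theta> (Dstar v1 \<alpha>)) x)"
proof -
  let ?g = "reciprocal_work \<alpha> \<Theta> v1 v2"
  note \<Omega>_part = set_integral_reciprocal_work[OF int12_\<Omega> int21_\<Omega>]
    and \<tau>_part = set_integral_reciprocal_work[OF int12_\<tau> int21_\<tau>]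
  have "\<Omega> \<inter> \<Omega>\<tau> = {}"
    unfolding \<Omega>\<tau>_def interaction_region_def by blast
  moreover have "?g (x', x) = - ?g (x, x')" if "x \<in> U" "x' \<in> U" for x x'
    using Theta_sym[OF that]
    by (intro reciprocal_work_antisymmetric[where \<alpha> = \<alpha> and \<Theta> = \<Theta>] Theta_swap[OF that(2,1)] antisym) blast
  ultimately have "set_lebesgue_integral (lborel \<Otimes>\<^sub>M lborel) (\<Omega> \<times> U) ?g
      = - set_lebesgue_integral (lborel \<Otimes>\<^sub>M lborel) (\<Omega>\<tau> \<times> U) ?g"
    using lborel.set_integral_antisymmetric_split \<Omega>_part(1) \<tau>_part(1) unfolding U_def by blast
  then show ?thesis
    unfolding Nop_eq_uminus_Dop inner_minus_right \<Omega>_part(2)[symmetric] \<tau>_part(2)[symmetric]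
    by (simp add: set_lebesgue_integral_def algebra_simps flip: integral_minus)
qed

end
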